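(* For every $l\in w_{1+\infty}$, $$[\hat l^B,\phi(z)]=-\frac12\big(l_z-\iota(l_z)\big)\cdot\phi(z).$$
   Context: Neutral fermions $\{\phi_i\}_{i\in\mathbb{Z}}$ satisfy $[\phi_i,\phi_j]_+=(-1)^i\delta_{i+j,0}$, acting on the B-type Fock space generated from a vacuum $|0\rangle$ with $\phi_i|0\rangle=0$ for $i<0$; dual vacuum $\langle0|\phi_i=0$ for $i>0$, vacuum expectation with $\langle0|0\rangle=1$, $\langle0|\phi_0|0\rangle=0$. $\phi(z)=\sum_{i\in\mathbb{Z}}\phi_iz^i$; $:\!\phi_i\phi_j\!:\,=\phi_i\phi_j-\langle0|\phi_i\phi_j|0\rangle$. $w_{1+\infty}=\mathrm{span}_{\mathbb{C}}\{z^i\partial_z^j\}$, with involution $\iota(z^k(z\partial_z)^m)=(-z\partial_z)^m(-z)^k$ extended linearly. The B-type realization of $l\in w_{1+\infty}$ is $\hat l^B=\frac12\mathrm{Res}_w\,w^{-1}:\!\phi(z)\,(l_w\cdot\phi(w))\!:\big|_{z=-w}$. *)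

theory Defs
  imports Complex_Main "HOL-Library.Groups_Big_Fun"
begin

text \<open>Operator-valued formal Laurent series in one variable are functions
  int => ('v => 'v) (coefficient of z^n).  The scalar multiplication of the
  complex vector space V (the Fock space) is the parameter sc.\<close>

type_synonym 'v opser = "int \<Rightarrow> 'v \<Rightarrow> 'v"

definition sgn1 :: "int \<Rightarrow> complex" where
  "sgn1 i = (-1) ^ nat \<bar>i\<bar>"

definition sscale :: "(complex \<Rightarrow> 'v \<Rightarrow> 'v) \<Rightarrow> complex \<Rightarrow> 'v opser \<Rightarrow> 'v opser" where
  "sscale sc c F = (\<lambda>n v. sc c (F n v))"

definition sdiff :: "'v::ab_group_add opser \<Rightarrow> 'v opser \<Rightarrow> 'v opser" where
  "sdiff F G = (\<lambda>n v. F n v - G n v)"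

definition zmul :: "int \<Rightarrow> 'v opser \<Rightarrow> 'v opser" where
  "zmul k F = (\<lambda>n. F (n - k))"

definition euler :: "(complex \<Rightarrow> 'v \<Rightarrow> 'v) \<Rightarrow> 'v opser \<Rightarrow> 'v opser" where
  "euler sc F = (\<lambda>n v. sc (of_int n) (F n v))"

text \<open>An element l of w_{1+infinity} is given by its finitely supported coefficients
  d k m in the basis z^k (z d/dz)^m.  Action l.F = sum d k m * z^k (z d/dz)^m F.\<close>
definition w_supp :: "(int \<Rightarrow> nat \<Rightarrow> complex) \<Rightarrow> (int \<times> nat) set" where
  "w_supp d = {(k, m). d k m \<noteq> 0}"

definition w_act :: "(complex \<Rightarrow> 'v \<Rightarrow> 'v::ab_group_add) \<Rightarrow> (int \<Rightarrow> nat \<Rightarrow> complex) \<Rightarrow> 'v opser \<Rightarrow> 'v opser" where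
  "w_act sc d F = (\<lambda>n v. \<Sum>(k, m)\<in>w_supp d. sc (d k m) (zmul k ((euler sc ^^ m) F) n v))"

text \<open>iota(z^k (z d/dz)^m) = (-z d/dz)^m (-z)^k, extended linearly; its action on series\<close>
definition iota_act :: "(complex \<Rightarrow> 'v \<Rightarrow> 'v::ab_group_add) \<Rightarrow> (int \<Rightarrow> nat \<Rightarrow> complex) \<Rightarrow> 'v opser \<Rightarrow> 'v opser" where
  "iota_act sc d F = (\<lambda>n v. \<Sum>(k, m)\<in>w_supp d.
      sc (d k m) (((\<lambda>G. sscale sc (-1) (euler sc G)) ^^ m) (sscale sc (sgn1 k) (zmul k F)) n v))"

definition vev :: "('v \<Rightarrow> complex) \<Rightarrow> 'v \<Rightarrow> ('v \<Rightarrow> 'v) \<Rightarrow> complex" where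
  "vev dvac vac A = dvac (A vac)"

text \<open>two-variable normally ordered product :F(z) G(w): with coefficient of z^a w^b
  equal to :F_a G_b: = F_a G_b - <0|F_a G_b|0>\<close>
definition nprod2 :: "(complex \<Rightarrow> 'v \<Rightarrow> 'v::ab_group_add) \<Rightarrow> ('v \<Rightarrow> complex) \<Rightarrow> 'v
    \<Rightarrow> 'v opser \<Rightarrow> 'v opser \<Rightarrow> int \<Rightarrow> int \<Rightarrow> 'v \<Rightarrow> 'v" where
  "nprod2 sc dvac vac F G = (\<lambda>a b v. F a (G b v) - sc (vev dvac vac (F a \<circ> G b)) v)"

text \<open>substitution z = -w in a two-variable series X(z,w); coefficient of w^n is
  sum_a (-1)^a X_{a, n-a} (pointwise a finite sum on each vector in our setting)\<close>
definition subst_neg :: "(complex \<Rightarrow> 'v \<Rightarrow> 'v::ab_group_add) \<Rightarrow> (int \<Rightarrow> int \<Rightarrow> 'v \<Rightarrow> 'v) \<Rightarrow> 'v opser" where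
  "subst_neg sc X = (\<lambda>n v. Sum_any (\<lambda>a. sc (sgn1 a) (X a (n - a) v)))"

definition res :: "'v opser \<Rightarrow> 'v \<Rightarrow> 'v" where
  "res F = F (-1)"

text \<open>B-type realization  hat l^B = 1/2 Res_w w^(-1) :phi(z) (l_w . phi(w)): |_{z=-w}\<close>
definition hatB :: "(complex \<Rightarrow> 'v \<Rightarrow> 'v::ab_group_add) \<Rightarrow> ('v \<Rightarrow> complex) \<Rightarrow> 'v
    \<Rightarrow> 'v opser \<Rightarrow> (int \<Rightarrow> nat \<Rightarrow> complex) \<Rightarrow> 'v \<Rightarrow> 'v" where
  "hatB sc dvac vac phi d = (\<lambda>v. sc (1/2)
      (res (zmul (-1) (subst_neg sc (nprod2 sc dvac vac phi (w_act sc d phi)))) v))"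

definition fockB :: "(complex \<Rightarrow> 'v \<Rightarrow> 'v::ab_group_add) \<Rightarrow> 'v opser \<Rightarrow> 'v \<Rightarrow> ('v \<Rightarrow> complex) \<Rightarrow> bool" where
  "fockB sc phi vac dvac \<longleftrightarrow>
     vector_space sc \<and>
     (\<forall>i. Vector_Spaces.linear sc sc (phi i)) \<and>
     Vector_Spaces.linear sc (*) dvac \<and>
     (\<forall>i j v. phi i (phi j v) + phi j (phi i v) = (if i + j = 0 then sc (sgn1 i) v else 0)) \<and>
     (\<forall>i<0. phi i vac = 0) \<and>
     (\<forall>i>0. \<forall>v. dvac (phi i v) = 0) \<and>
     dvac vac = 1 \<and> dvac (phi 0 vac) = 0 \<and>
     (\<forall>v. v \<in> module.span sc (range (\<lambda>is. foldr phi is vac)))"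

end

theory Submission
  imports Defs
begin

(* Write psi = l.phi, so that hat l^B = 1/2 sum_a (-1)^a :phi_a psi_(-a): .  Since the vacuum
   expectation is a scalar, [:A B:, C] = A {B, C} - {A, C} B, and both anticommutators are
   scalars: {phi_a, phi_n} = (-1)^a delta_(a+n,0), and {psi_b, phi_n} is a finite combination of
   such deltas.  The delta from {phi_a, phi_n} picks out the term a = -n and yields -1/2 psi_n;
   the deltas from {psi_(-a), phi_n} pick out a = n - k and reassemble
   1/2 sum d_(k,m) (-n)^m (-1)^k phi_(n-k) = 1/2 (iota(l).phi)_n.  The sums over a are finite on
   each vector because every vector of the Fock space is killed by phi_j for j << 0. *)

lemma sgn1_even: "sgn1 i = (if even i then 1 else -1)"
  by (simp add: sgn1_def even_nat_iff)

lemma finite_support_if_eventually_zero_int: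
  fixes f :: "int \<Rightarrow> 'a::zero"
  assumes "\<forall>\<^sub>F a in at_bot. f a = 0" and "\<forall>\<^sub>F a in at_top. f a = 0"
  shows "finite {a. f a \<noteq> 0}"
proof -
  obtain L U where "\<forall>a\<le>L. f a = 0" and "\<forall>a\<ge>U. f a = 0"
    using assms by (auto simp: eventually_at_bot_linorder eventually_at_top_linorder)
  then have "{a. f a \<noteq> 0} \<subseteq> {L..U}"
    by (force simp: not_le intro: less_imp_le)
  then show ?thesis
    by (rule finite_subset) simp
qed

lemma Sum_any_diff:
  fixes f g :: "'a \<Rightarrow> 'b::ab_group_add"
  assumes "finite {a. f a \<noteq> 0}" and "finite {a. g a \<noteq> 0}"
  shows "Sum_any (\<lambda>a. f a - g a) = Sum_any f - Sum_any g"
proof -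
  let ?A = "{a. f a \<noteq> 0} \<union> {a. g a \<noteq> 0}"
  have "finite ?A" using assms by simp
  moreover have "{a. f a - g a \<noteq> 0} \<subseteq> ?A" by auto
  ultimately show ?thesis
    by (simp add: Sum_any.expand_superset[of ?A] sum_subtractf)
qed

lemma Sum_any_sum_swap:
  fixes f :: "'a \<Rightarrow> 'b \<Rightarrow> 'c::comm_monoid_add"
  assumes "finite S" and "\<And>s. s \<in> S \<Longrightarrow> finite {a. f a s \<noteq> 0}"
  shows "Sum_any (\<lambda>a. \<Sum>s\<in>S. f a s) = (\<Sum>s\<in>S. Sum_any (\<lambda>a. f a s))"
  using assms
proof (induction S rule: finite_induct)
  case (insert s S)
  have "finite {a. (\<Sum>s\<in>S. f a s) \<noteq> 0}"
  proof (rule finite_subset)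
    show "{a. (\<Sum>s\<in>S. f a s) \<noteq> 0} \<subseteq> (\<Union>s\<in>S. {a. f a s \<noteq> 0})"
      by (auto elim: sum.not_neutral_contains_not_neutral)
    show "finite (\<Union>s\<in>S. {a. f a s \<noteq> 0})"
      using insert by simp
  qed
  with insert show ?case
    by (simp add: Sum_any.distrib)
qed simp

lemma (in module_hom) Sum_any_commute:
  assumes "finite {a. g a \<noteq> 0}"
  shows "f (Sum_any g) = Sum_any (\<lambda>a. f (g a))"
proof -
  have "{a. f (g a) \<noteq> 0} \<subseteq> {a. g a \<noteq> 0}" by auto
  then show ?thesis
    by (simp add: Sum_any.expand_superset[OF assms] sum)
qed

context
  fixes sc :: "complex \<Rightarrow> 'v::ab_group_add \<Rightarrow> 'v"
  assumes vector_space: "vector_space sc"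
begin

interpretation vector_space sc
  by (rule vector_space)

lemma w_act_coeff:
  "w_act sc d F b v = (\<Sum>(k, m)\<in>w_supp d. sc (d k m * of_int (b - k) ^ m) (F (b - k) v))"
proof -
  have euler_pow: "(euler sc ^^ m) G = (\<lambda>n v. sc (of_int n ^ m) (G n v))" for m G
    by (induction m) (simp_all add: euler_def fun_eq_iff mult.commute)
  show ?thesis
    unfolding w_act_def euler_pow zmul_def by (simp add: split_def)
qed

lemma iota_act_coeff:
  "iota_act sc d F n v = (\<Sum>(k, m)\<in>w_supp d. sc (d k m * (- of_int n) ^ m * sgn1 k) (F (n - k) v))"
proof -
  have iota_pow: "((\<lambda>G. sscale sc (-1) (euler sc G)) ^^ m) G
      = (\<lambda>n v. sc ((- of_int n) ^ m) (G n v))" for m G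
    by (induction m) (simp_all add: euler_def sscale_def fun_eq_iff)
  show ?thesis
    unfolding iota_act_def iota_pow unfolding zmul_def sscale_def
    by (simp add: split_def mult.commute mult.left_commute)
qed

end

lemma hatB_eq_Sum_any:
  "hatB sc dvac vac phi d v =
     sc (1/2) (Sum_any (\<lambda>a. sc (sgn1 a) (nprod2 sc dvac vac phi (w_act sc d phi) a (- a) v)))"
  by (simp add: hatB_def res_def zmul_def subst_neg_def)

definition w_contraction :: "(int \<Rightarrow> nat \<Rightarrow> complex) \<Rightarrow> int \<Rightarrow> int \<Rightarrow> complex" where
  "w_contraction d b n =
     (\<Sum>(k, m)\<in>w_supp d. if b - k + n = 0 then d k m * of_int (b - k) ^ m * sgn1 (b - k) else 0)"

lemma w_contraction_finite_support:
  assumes "finite (w_supp d)"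
  shows "finite {a. w_contraction d (- a) n \<noteq> 0}"
proof (rule finite_subset)
  show "{a. w_contraction d (- a) n \<noteq> 0} \<subseteq> (\<lambda>p. n - fst p) ` w_supp d"
    unfolding w_contraction_def
    by (force elim: sum.not_neutral_contains_not_neutral split: if_splits)
  show "finite ((\<lambda>p. n - fst p) ` w_supp d)"
    using assms by simp
qed

locale neutral_fermion_fock =
  fixes sc :: "complex \<Rightarrow> 'v::ab_group_add \<Rightarrow> 'v" and phi :: "'v opser"
    and vac :: 'v and dvac :: "'v \<Rightarrow> complex"
  assumes fockB: "fockB sc phi vac dvac"
begin

sublocale vector_space sc
  using fockB by (simp add: fockB_def)

lemma phi_hom: "module_hom sc sc (phi i)"
  using fockB by (simp add: fockB_def module_hom_iff_linear)

lemma dvac_hom: "module_hom sc (*) dvac"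
  using fockB by (simp add: fockB_def module_hom_iff_linear)

lemmas phi_add = module_hom.add[OF phi_hom]
  and phi_scale = module_hom.scale[OF phi_hom]
  and phi_diff = module_hom.diff[OF phi_hom]
  and phi_sum = module_hom.sum[OF phi_hom]
  and dvac_scale = module_hom.scale[OF dvac_hom]

lemma phi_zero [simp]: "phi i 0 = 0"
  using module_hom.zero[OF phi_hom] .

lemma dvac_zero [simp]: "dvac 0 = 0"
  using module_hom.zero[OF dvac_hom] .

lemma phi_anticomm:
  "phi i (phi j v) + phi j (phi i v) = (if i + j = 0 then sc (sgn1 i) v else 0)"
  using fockB unfolding fockB_def by blast

lemma phi_vac: "i < 0 \<Longrightarrow> phi i vac = 0"
  using fockB unfolding fockB_def by blast

lemma dvac_vac: "dvac vac = 1"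
  using fockB unfolding fockB_def by blast

lemma phi_eventually_annihilates: "\<forall>\<^sub>F j in at_bot. phi j v = 0"
proof -
  have monomial: "\<forall>\<^sub>F j in at_bot. phi j (foldr phi is vac) = 0" for "is"
  proof (induction "is")
    case Nil
    show ?case
      unfolding eventually_at_bot_linorder by (intro exI[of _ "-1"]) (simp add: phi_vac)
  next
    case (Cons i "is")
    then have "\<forall>\<^sub>F j in at_bot. j \<noteq> - i \<and> phi j (foldr phi is vac) = 0"
      by (intro eventually_conj eventually_at_bot_not_equal)
    then show ?case
    proof (rule eventually_mono)
      fix j assume "j \<noteq> - i \<and> phi j (foldr phi is vac) = 0"
      then show "phi j (foldr phi (i # is) vac) = 0"
        using phi_anticomm[of j i "foldr phi is vac"] by (simp add: eq_neg_iff_add_eq_0)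
    qed
  qed
  have "v \<in> span (range (\<lambda>is. foldr phi is vac))"
    using fockB unfolding fockB_def by blast
  then show ?thesis
  proof (induction rule: span_induct_alt)
    case (step c x y)
    then obtain "is" where "x = foldr phi is vac" by auto
    with monomial[of "is"] step.IH show ?case
      by (auto elim: eventually_elim2 simp: phi_add phi_scale)
  qed simp
qed

lemma nprod2_commutator:
  "nprod2 sc dvac vac phi psi a b (phi n v) - phi n (nprod2 sc dvac vac phi psi a b v)
   = phi a (psi b (phi n v) + phi n (psi b v)) - (phi a (phi n (psi b v)) + phi n (phi a (psi b v)))"
  by (simp add: nprod2_def phi_add phi_diff phi_scale algebra_simps)

lemma nprod2_eq_0_right:
  assumes "psi b v = 0" and "psi b vac = 0"
  shows "nprod2 sc dvac vac phi psi a b v = 0"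
  using assms by (simp add: nprod2_def vev_def)

lemma nprod2_eq_0_left:
  assumes "phi a v = 0" and "phi a vac = 0" and "psi b 0 = 0"
    and anticomm: "\<And>u. psi b (phi a u) + phi a (psi b u) = sc c u"
  shows "nprod2 sc dvac vac phi psi a b v = 0"
proof -
  have "phi a (psi b u) = sc c u" if "phi a u = 0" for u
    using anticomm[of u] that \<open>psi b 0 = 0\<close> by simp
  then show ?thesis
    using assms(1,2) by (simp add: nprod2_def vev_def dvac_scale dvac_vac)
qed

lemmas w_act_phi_coeff = w_act_coeff[OF vector_space_axioms, of d phi] for d

lemma w_act_phi_zero [simp]: "w_act sc d phi b 0 = 0"
  by (simp add: w_act_phi_coeff)

lemma w_act_phi_anticomm:
  "w_act sc d phi b (phi n u) + phi n (w_act sc d phi b u) = sc (w_contraction d b n) u"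
proof -
  have "w_act sc d phi b (phi n u) + phi n (w_act sc d phi b u)
      = (\<Sum>(k, m)\<in>w_supp d.
           sc (d k m * of_int (b - k) ^ m) (phi (b - k) (phi n u) + phi n (phi (b - k) u)))"
    by (simp add: w_act_phi_coeff phi_sum phi_scale split_def sum.distrib scale_right_distrib)
  also have "\<dots> = sc (w_contraction d b n) u"
    unfolding w_contraction_def scale_sum_left by (rule sum.cong) (auto simp: phi_anticomm)
  finally show ?thesis .
qed

lemma w_act_eventually_zero:
  assumes "finite (w_supp d)"
  shows "\<forall>\<^sub>F b in at_bot. w_act sc d phi b u = 0"
proof -
  have "\<forall>\<^sub>F b in at_bot. phi (b - k) u = 0" for k
  proof -
    obtain N where "\<forall>j\<le>N. phi j u = 0"
      using phi_eventually_annihilates[of u] by (auto simp: eventually_at_bot_linorder)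
    then show ?thesis
      unfolding eventually_at_bot_linorder by (intro exI[of _ "N + k"]) simp
  qed
  then have "\<forall>\<^sub>F b in at_bot. \<forall>p\<in>w_supp d. phi (b - fst p) u = 0"
    using assms by (simp add: eventually_ball_finite)
  then show ?thesis
    by (rule eventually_mono) (simp add: w_act_phi_coeff split_def)
qed

definition hatB_summand :: "(int \<Rightarrow> nat \<Rightarrow> complex) \<Rightarrow> int \<Rightarrow> 'v \<Rightarrow> 'v" where
  "hatB_summand d a v = sc (sgn1 a) (nprod2 sc dvac vac phi (w_act sc d phi) a (- a) v)"

lemma hatB_summand_finite_support:
  assumes "finite (w_supp d)"
  shows "finite {a. hatB_summand d a v \<noteq> 0}"
proof (rule finite_support_if_eventually_zero_int)
  have "\<forall>\<^sub>F a in at_bot. phi a v = 0 \<and> phi a vac = 0"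
    by (intro eventually_conj phi_eventually_annihilates)
  then show "\<forall>\<^sub>F a in at_bot. hatB_summand d a v = 0"
    by (rule eventually_mono)
      (auto simp: hatB_summand_def intro: nprod2_eq_0_left w_act_phi_anticomm)
  have "\<forall>\<^sub>F b in at_bot. w_act sc d phi b v = 0 \<and> w_act sc d phi b vac = 0"
    using assms by (intro eventually_conj w_act_eventually_zero)
  then have "\<forall>\<^sub>F a in at_top. w_act sc d phi (- a) v = 0 \<and> w_act sc d phi (- a) vac = 0"
    by (simp add: at_bot_mirror eventually_filtermap)
  then show "\<forall>\<^sub>F a in at_top. hatB_summand d a v = 0"
    by (rule eventually_mono) (simp add: hatB_summand_def nprod2_eq_0_right)
qed

lemma hatB_summand_commutator:
  "hatB_summand d a (phi n v) - phi n (hatB_summand d a v)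
   = sc (sgn1 a * w_contraction d (- a) n) (phi a v) - (if a = - n then w_act sc d phi n v else 0)"
proof -
  let ?N = "nprod2 sc dvac vac phi (w_act sc d phi) a (- a)"
  have "hatB_summand d a (phi n v) - phi n (hatB_summand d a v)
      = sc (sgn1 a) (?N (phi n v) - phi n (?N v))"
    by (simp add: hatB_summand_def phi_scale scale_right_diff_distrib)
  also have "\<dots> = sc (sgn1 a) (sc (w_contraction d (- a) n) (phi a v)
      - (if a + n = 0 then sc (sgn1 a) (w_act sc d phi (- a) v) else 0))"
    by (simp only: nprod2_commutator w_act_phi_anticomm phi_anticomm phi_scale)
  also have "\<dots> = sc (sgn1 a * w_contraction d (- a) n) (phi a v)
      - (if a = - n then w_act sc d phi n v else 0)"
    using sgn1_even[of a] by (auto simp: scale_right_diff_distrib scale_scale)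
  finally show ?thesis .
qed

lemma contraction_sum_eq_iota_act:
  assumes "finite (w_supp d)"
  shows "Sum_any (\<lambda>a. sc (sgn1 a * w_contraction d (- a) n) (phi a v)) = iota_act sc d phi n v"
proof -
  let ?c = "\<lambda>a k m. sgn1 a * (d k m * of_int (- a - k) ^ m * sgn1 (- a - k))"
  have "sc (sgn1 a * w_contraction d (- a) n) (phi a v)
      = (\<Sum>(k, m)\<in>w_supp d. if a = n - k then sc (?c a k m) (phi a v) else 0)" for a
    unfolding w_contraction_def sum_distrib_left scale_sum_left
    by (rule sum.cong) auto
  then have "Sum_any (\<lambda>a. sc (sgn1 a * w_contraction d (- a) n) (phi a v))
      = (\<Sum>(k, m)\<in>w_supp d. sc (?c (n - k) k m) (phi (n - k) v))"
    using assms by (simp add: Sum_any_sum_swap split_def)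
  also have "\<dots> = iota_act sc d phi n v"
    unfolding iota_act_coeff[OF vector_space_axioms]
    by (rule sum.cong) (auto simp: sgn1_even)
  finally show ?thesis .
qed

lemma hatB_phi_commutator:
  assumes fin: "finite (w_supp d)"
  shows "hatB sc dvac vac phi d (phi n v) - phi n (hatB sc dvac vac phi d v)
       = sc (- 1/2) (w_act sc d phi n v - iota_act sc d phi n v)"
proof -
  let ?T = "hatB_summand d"
  let ?C = "\<lambda>a. sc (sgn1 a * w_contraction d (- a) n) (phi a v)"
  have fin_T: "finite {a. ?T a u \<noteq> 0}" for u
    using fin by (rule hatB_summand_finite_support)
  have fin_phi_T: "finite {a. phi n (?T a v) \<noteq> 0}"
    by (rule finite_subset[OF _ fin_T[of v]]) auto
  have fin_C: "finite {a. ?C a \<noteq> 0}"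
    by (rule finite_subset[OF _ w_contraction_finite_support[OF fin]]) auto
  have fin_delta: "finite {a. (if a = - n then w_act sc d phi n v else 0) \<noteq> 0}"
    by (rule finite_subset[of _ "{- n}"]) auto
  have "hatB sc dvac vac phi d (phi n v) - phi n (hatB sc dvac vac phi d v)
      = sc (1/2) (Sum_any (\<lambda>a. ?T a (phi n v)) - phi n (Sum_any (\<lambda>a. ?T a v)))"
    by (simp add: hatB_eq_Sum_any hatB_summand_def phi_scale scale_right_diff_distrib)
  also have "\<dots> = sc (1/2) (Sum_any (\<lambda>a. ?T a (phi n v) - phi n (?T a v)))"
    by (simp add: module_hom.Sum_any_commute[OF phi_hom fin_T] Sum_any_diff[OF fin_T fin_phi_T])
  also have "\<dots> = sc (1/2) (Sum_any ?C - w_act sc d phi n v)"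
    by (simp add: hatB_summand_commutator Sum_any_diff[OF fin_C fin_delta])
  also have "\<dots> = sc (1/2) (iota_act sc d phi n v - w_act sc d phi n v)"
    by (simp add: contraction_sum_eq_iota_act[OF fin])
  also have "\<dots> = sc (- 1/2) (w_act sc d phi n v - iota_act sc d phi n v)"
    by (simp add: scale_right_diff_distrib scale_minus_left)
  finally show ?thesis .
qed

end

theorem lemma3p3:
  fixes sc :: "complex \<Rightarrow> 'v::ab_group_add \<Rightarrow> 'v"
    and phi :: "'v opser" and vac :: 'v and dvac :: "'v \<Rightarrow> complex"
    and d :: "int \<Rightarrow> nat \<Rightarrow> complex"
  assumes "fockB sc phi vac dvac"
    and "finite (w_supp d)"
  shows "(\<lambda>n v. hatB sc dvac vac phi d (phi n v) - phi n (hatB sc dvac vac phi d v))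
       = sscale sc (- 1/2) (sdiff (w_act sc d phi) (iota_act sc d phi))"
proof -
  interpret neutral_fermion_fock sc phi vac dvac
    using assms(1) by unfold_locales
  show ?thesis
    using hatB_phi_commutator[OF assms(2)] by (simp add: sscale_def sdiff_def fun_eq_iff)
qed

end
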